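(* Let $k$ be an odd integer with $k\ge 5$, let $D$ be a strong $k$-quasi-transitive digraph with $\mathrm{diam}(D)\ge k+2$, let $u,v\in V(D)$ with $d(u,v)=k+2$, and let $P$ be a shortest $(u,v)$-path. Let $I=\{x\in V(D)\setminus V(P): x\Rightarrow V(P)\}$, $W=\{x\in V(D)\setminus V(P): V(P)\Rightarrow x\}$ and $B=V(D)\setminus(V(P)\cup I\cup W)$. If $D[V(P)]$ is a semicomplete bipartite digraph, then $D[B]$ is either a semicomplete bipartite digraph or an empty digraph.
   Context: All digraphs are finite, without loops or multiple arcs (opposite arcs allowed). Vertices $x,y$ are adjacent if $xy$ or $yx$ is an arc. For vertex sets $X,Y$ (singletons identified with vertices), $X\Rightarrow Y$ means there is no arc from $Y$ to $X$. For $k\ge 2$, $D$ is $k$-quasi-transitive if for every path $x_0x_1\ldots x_k$ of length $k$, $x_0$ and $x_k$ are adjacent. $d(x,y)$ is the length of a shortest $(x,y)$-path, $\mathrm{diam}(D)=\max_{x,y}d(x,y)$. $D[S]$ is the induced subdigraph. A semicomplete bipartite digraph: there is a bipartition $(X,Y)$ of the vertex set with no arcs inside $X$ or $Y$ and every vertex of $X$ adjacent to every vertex of $Y$. An empty digraph is one with no arcs. *)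

theory Defs
  imports Main
begin

text \<open>A finite digraph with vertex set V and arc set A: no loops; multiple arcs
are excluded automatically since A is a set of pairs; opposite arcs allowed.\<close>
definition digraph :: "'a set \<Rightarrow> ('a \<times> 'a) set \<Rightarrow> bool" where
  "digraph V A \<longleftrightarrow> finite V \<and> A \<subseteq> V \<times> V \<and> (\<forall>x. (x, x) \<notin> A)"

definition adjacent :: "('a \<times> 'a) set \<Rightarrow> 'a \<Rightarrow> 'a \<Rightarrow> bool" where
  "adjacent A x y \<longleftrightarrow> (x, y) \<in> A \<or> (y, x) \<in> A"

text \<open>A path is a nonempty list of distinct vertices with consecutive arcs;
its length is the number of arcs, i.e. length ps - 1.\<close>
definition is_path :: "'a set \<Rightarrow> ('a \<times> 'a) set \<Rightarrow> 'a list \<Rightarrow> bool" where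
  "is_path V A ps \<longleftrightarrow> ps \<noteq> [] \<and> distinct ps \<and> set ps \<subseteq> V \<and>
     (\<forall>i. Suc i < length ps \<longrightarrow> (ps ! i, ps ! Suc i) \<in> A)"

definition is_uv_path :: "'a set \<Rightarrow> ('a \<times> 'a) set \<Rightarrow> 'a \<Rightarrow> 'a \<Rightarrow> 'a list \<Rightarrow> bool" where
  "is_uv_path V A u v ps \<longleftrightarrow> is_path V A ps \<and> hd ps = u \<and> last ps = v"

definition k_quasi_transitive :: "nat \<Rightarrow> 'a set \<Rightarrow> ('a \<times> 'a) set \<Rightarrow> bool" where
  "k_quasi_transitive k V A \<longleftrightarrow>
     (\<forall>ps. is_path V A ps \<and> length ps = k + 1 \<longrightarrow> adjacent A (hd ps) (last ps))"

definition strong :: "'a set \<Rightarrow> ('a \<times> 'a) set \<Rightarrow> bool" where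
  "strong V A \<longleftrightarrow> (\<forall>u\<in>V. \<forall>v\<in>V. \<exists>ps. is_uv_path V A u v ps)"

text \<open>Distance: length of a shortest (u,v)-path (meaningful when one exists).\<close>
definition dist :: "'a set \<Rightarrow> ('a \<times> 'a) set \<Rightarrow> 'a \<Rightarrow> 'a \<Rightarrow> nat" where
  "dist V A u v = (LEAST n. \<exists>ps. is_uv_path V A u v ps \<and> length ps = n + 1)"

definition diam :: "'a set \<Rightarrow> ('a \<times> 'a) set \<Rightarrow> nat" where
  "diam V A = Max {dist V A x y | x y. x \<in> V \<and> y \<in> V}"

definition dom_to :: "('a \<times> 'a) set \<Rightarrow> 'a set \<Rightarrow> 'a set \<Rightarrow> bool" where
  "dom_to A X Y \<longleftrightarrow> (\<forall>y\<in>Y. \<forall>x\<in>X. (y, x) \<notin> A)"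

definition semicomplete_bipartite_on :: "('a \<times> 'a) set \<Rightarrow> 'a set \<Rightarrow> bool" where
  "semicomplete_bipartite_on A S \<longleftrightarrow>
     (\<exists>X Y. X \<union> Y = S \<and> X \<inter> Y = {} \<and> X \<noteq> {} \<and> Y \<noteq> {} \<and>
        (\<forall>x\<in>X. \<forall>x'\<in>X. (x, x') \<notin> A) \<and> (\<forall>y\<in>Y. \<forall>y'\<in>Y. (y, y') \<notin> A) \<and>
        (\<forall>x\<in>X. \<forall>y\<in>Y. adjacent A x y))"

definition empty_on :: "('a \<times> 'a) set \<Rightarrow> 'a set \<Rightarrow> bool" where
  "empty_on A S \<longleftrightarrow> (\<forall>x\<in>S. \<forall>y\<in>S. (x, y) \<notin> A)"

end

theory Submission
  imports Defs
begin

(* Write P = p 0, ..., p n with n = k + 2. As P is shortest and D[V(P)] is semicomplete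
   bipartite, its parts are the two index parities, so the arcs inside P are the path arcs
   and the backward chords p b -> p a with b - a odd and at least 3; moreover a vertex off P
   cannot jump forward along P by more than two steps. Applying k-quasi-transitivity to
   paths on k + 1 vertices that run along P and turn around on a backward chord, one shows
   that all P-neighbours of a vertex z of B have the same parity (the class of z), and that
   z is adjacent to every vertex of its class among p 0, ..., p 3 and p (n - 3), ..., p n.
   An arc between two vertices of B of the same class would give such a path joining one of
   them to a vertex of P of the wrong parity. Two non-adjacent vertices of different classes
   are excluded by following the forced orientations of their arcs to the first and last
   vertices of P. So the classes form a semicomplete bipartition of D[B], unless one class
   is empty, in which case D[B] has no arcs. *)

section \<open>Paths as index lists\<close>

lemma successively_upt:
  assumes "\<And>m. a \<le> m \<Longrightarrow> Suc m < b \<Longrightarrow> R m (Suc m)"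
  shows "successively R [a..<b]"
  using assms by (auto simp: successively_conv_nth)

lemma is_path_iff_successively:
  "is_path V A ps \<longleftrightarrow>
     ps \<noteq> [] \<and> distinct ps \<and> set ps \<subseteq> V \<and> successively (\<lambda>a b. (a, b) \<in> A) ps"
  unfolding is_path_def successively_conv_nth by auto

lemma is_path_map:
  assumes "xs \<noteq> []" "distinct xs" "inj_on f (set xs)" "f ` set xs \<subseteq> V"
    and "successively (\<lambda>a b. (f a, f b) \<in> A) xs"
  shows "is_path V A (map f xs)"
  using assms by (simp add: is_path_iff_successively distinct_map successively_map)

lemma is_path_converse: "is_path V (A\<inverse>) ps \<longleftrightarrow> is_path V A (rev ps)"
  unfolding is_path_iff_successively by auto

lemma adjacent_commute: "adjacent A x y \<longleftrightarrow> adjacent A y x"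
  unfolding adjacent_def by auto

lemma adjacent_converse [simp]: "adjacent (A\<inverse>) x y \<longleftrightarrow> adjacent A x y"
  unfolding adjacent_def by auto

lemma dist_le_path_length:
  assumes "is_uv_path V A u v ps"
  shows "dist V A u v \<le> length ps - 1"
proof -
  have "ps \<noteq> []" using assms unfolding is_uv_path_def is_path_def by auto
  then have "length ps = (length ps - 1) + 1" by simp
  then show ?thesis unfolding dist_def using assms by (intro Least_le) blast
qed

section \<open>Shortest paths\<close>

lemma shortest_path_length_le:
  assumes "length P = dist V A u v + 1" "is_uv_path V A u v Q"
  shows "length P \<le> length Q"
proof -
  have "Q \<noteq> []" using assms(2) unfolding is_uv_path_def is_path_def by simp
  then show ?thesis using dist_le_path_length[OF assms(2)] assms(1) by (cases Q) auto
qed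

(* Q extends P by vertices off P, and xs lists the Q-indices of a (u,v)-path. *)

lemma shortest_path_le_index_walk:
  assumes P: "is_uv_path V A u v P" "length P = dist V A u v + 1"
    and Q: "distinct Q" "set Q \<subseteq> V" "take (length P) Q = P"
    and xs: "xs \<noteq> []" "hd xs = 0" "last xs = length P - 1" "distinct xs"
      "set xs \<subseteq> {..<length Q}" "successively (\<lambda>a b. (Q ! a, Q ! b) \<in> A) xs"
  shows "length P \<le> length xs"
proof -
  have "P \<noteq> []" "hd P = u" "last P = v"
    using P(1) unfolding is_uv_path_def is_path_def by auto
  then have "Q ! 0 = u" "Q ! (length P - 1) = v"
    using Q(3) by (metis hd_conv_nth last_conv_nth diff_less length_greater_0_conv
        less_one nth_take)+
  moreover have "inj_on (nth Q) (set xs)"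
    using Q(1) xs(5) by (intro inj_on_nth) auto
  moreover have "nth Q ` set xs \<subseteq> V"
    using Q(2) xs(5) by (auto dest!: subsetD intro: nth_mem)
  ultimately have "is_uv_path V A u v (map (nth Q) xs)"
    unfolding is_uv_path_def using xs
    by (auto intro!: is_path_map simp: hd_map last_map)
  from shortest_path_length_le[OF P(2) this] show ?thesis by simp
qed

lemma is_path_successively_upt:
  assumes "is_path V A P" "c \<le> length P" "\<And>m. m < length P \<Longrightarrow> Q ! m = P ! m"
  shows "successively (\<lambda>a b. (Q ! a, Q ! b) \<in> A) [a..<c]"
  by (rule successively_upt) (use assms in \<open>auto simp: is_path_def\<close>)

lemma shortest_path_no_shortcut:
  assumes P: "is_uv_path V A u v P" "length P = dist V A u v + 1"
    and ab: "a + 2 \<le> b" "b < length P"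
  shows "(P ! a, P ! b) \<notin> A"
proof
  assume arc: "(P ! a, P ! b) \<in> A"
  have path: "is_path V A P" using P(1) unfolding is_uv_path_def by simp
  let ?xs = "[0..<Suc a] @ [b..<length P]"
  have "length P \<le> length ?xs"
  proof (rule shortest_path_le_index_walk[OF P, of P])
    show "distinct P" "set P \<subseteq> V" using path unfolding is_path_def by auto
    show "successively (\<lambda>a b. (P ! a, P ! b) \<in> A) ?xs"
      using is_path_successively_upt[OF path, of "Suc a" P 0]
        is_path_successively_upt[OF path, of "length P" P b] arc ab
      by (auto simp del: upt_Suc simp: successively_append_iff last_upt)
  qed (use ab in \<open>auto simp del: upt_Suc simp: hd_append last_append last_upt\<close>)
  then show False using ab by simp
qed

lemma shortest_path_detour_bound:
  assumes P: "is_uv_path V A u v P" "length P = dist V A u v + 1"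
    and z: "z \<in> V" "z \<notin> set P" and ij: "i < length P" "j < length P"
    and arcs: "(P ! i, z) \<in> A" "(z, P ! j) \<in> A"
  shows "j \<le> i + 2"
proof (rule ccontr)
  assume "\<not> j \<le> i + 2"
  have path: "is_path V A P" using P(1) unfolding is_uv_path_def by simp
  let ?Q = "P @ [z]"
  let ?xs = "[0..<Suc i] @ [length P] @ [j..<length P]"
  have "length P \<le> length ?xs"
  proof (rule shortest_path_le_index_walk[OF P, of ?Q])
    show "distinct ?Q" "set ?Q \<subseteq> V" using path z unfolding is_path_def by auto
    show "successively (\<lambda>a b. (?Q ! a, ?Q ! b) \<in> A) ?xs"
      using is_path_successively_upt[OF path, of "Suc i" ?Q 0]
        is_path_successively_upt[OF path, of "length P" ?Q j] arcs ij \<open>\<not> j \<le> i + 2\<close>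
      by (auto simp del: upt_Suc simp: successively_append_iff successively_Cons last_upt
          nth_append)
  qed (use ij \<open>\<not> j \<le> i + 2\<close> in \<open>auto simp del: upt_Suc simp: hd_append last_upt\<close>)
  then show False using ij \<open>\<not> j \<le> i + 2\<close> by simp
qed

lemma semicomplete_bipartite_path_adjacent_iff:
  assumes path: "is_path V A P" and bip: "semicomplete_bipartite_on A (set P)"
    and ab: "a < length P" "b < length P"
  shows "adjacent A (P ! a) (P ! b) \<longleftrightarrow> even a \<noteq> even b"
proof -
  obtain X Y where XY: "X \<union> Y = set P" "X \<inter> Y = {}" "\<forall>x\<in>X. \<forall>x'\<in>X. (x, x') \<notin> A"
    "\<forall>y\<in>Y. \<forall>y'\<in>Y. (y, y') \<notin> A" "\<forall>x\<in>X. \<forall>y\<in>Y. adjacent A x y"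
    using bip unfolding semicomplete_bipartite_on_def by blast
  have side: "P ! m \<in> X \<longleftrightarrow> (even m \<longleftrightarrow> P ! 0 \<in> X)" if "m < length P" for m
    using that
  proof (induction m)
    case (Suc m)
    have "(P ! m, P ! Suc m) \<in> A" using path Suc.prems unfolding is_path_def by simp
    moreover have "P ! m \<in> X \<union> Y" "P ! Suc m \<in> X \<union> Y" using XY(1) Suc.prems by auto
    ultimately have "P ! Suc m \<in> X \<longleftrightarrow> P ! m \<notin> X" using XY(2-4) by blast
    then show ?case using Suc by auto
  qed simp
  have inXY: "P ! a \<in> X \<union> Y" "P ! b \<in> X \<union> Y" using XY(1) ab by auto
  show ?thesis
  proof
    assume "adjacent A (P ! a) (P ! b)"
    then have "P ! a \<in> X \<longleftrightarrow> P ! b \<notin> X"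
      using inXY XY(3,4) unfolding adjacent_def by blast
    then show "even a \<noteq> even b" using side[OF ab(1)] side[OF ab(2)] by blast
  next
    assume "even a \<noteq> even b"
    then have "P ! a \<in> X \<longleftrightarrow> P ! b \<in> Y"
      using inXY XY(2) side[OF ab(1)] side[OF ab(2)] by blast
    then show "adjacent A (P ! a) (P ! b)"
      using inXY XY(5) adjacent_commute by (metis Un_iff)
  qed
qed

section \<open>A shortest path inducing a semicomplete bipartite digraph\<close>

(* The path P = p 0, ..., p n with n = k + 2; bipartite_geodesic_shortest_path derives
   these assumptions from those of the theorem. *)

locale bipartite_geodesic =
  fixes V :: "'a set" and A :: "('a \<times> 'a) set" and p :: "nat \<Rightarrow> 'a" and n :: nat
  assumes n_ge_7: "7 \<le> n" and n_odd: "odd n"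
    and p_in_V: "\<And>m. m \<le> n \<Longrightarrow> p m \<in> V"
    and inj_p: "inj_on p {..n}"
    and no_loop: "\<And>x. (x, x) \<notin> A"
    and path_arc: "\<And>m. m < n \<Longrightarrow> (p m, p (Suc m)) \<in> A"
    and backward_chord: "\<And>a b. a + 3 \<le> b \<Longrightarrow> b \<le> n \<Longrightarrow> odd (b - a) \<Longrightarrow> (p b, p a) \<in> A"
    and no_arc_same_parity: "\<And>a b. a \<le> n \<Longrightarrow> b \<le> n \<Longrightarrow> even a = even b \<Longrightarrow> (p a, p b) \<notin> A"
    and detour_bound: "\<And>z i j. z \<in> V \<Longrightarrow> z \<notin> p ` {..n} \<Longrightarrow> i \<le> n \<Longrightarrow> j \<le> n \<Longrightarrow>
      (p i, z) \<in> A \<Longrightarrow> (z, p j) \<in> A \<Longrightarrow> j \<le> i + 2"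
    and quasi_transitive: "\<And>ps. is_path V A ps \<Longrightarrow> length ps = n - 1 \<Longrightarrow>
      adjacent A (hd ps) (last ps)"
begin

(* Indices n + 1 and n + 2 stand for vertices x, y off P, so that paths through P and
   x, y are given by index lists. *)

definition extend :: "'a \<Rightarrow> 'a \<Rightarrow> nat \<Rightarrow> 'a" where
  "extend x y m = (if m = Suc n then x else if m = Suc (Suc n) then y else p m)"

lemma extend_p [simp]: "m \<le> n \<Longrightarrow> extend x y m = p m"
  and extend_Suc [simp]: "extend x y (Suc n) = x"
  and extend_Suc_Suc [simp]: "extend x y (Suc (Suc n)) = y"
  unfolding extend_def by auto

lemma successively_extend_upt:
  "c \<le> Suc n \<Longrightarrow> successively (\<lambda>a b. (extend x y a, extend x y b) \<in> A) [a..<c]"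
  by (rule successively_upt) (simp add: path_arc)

lemma walk_ends_adjacent:
  assumes "x \<in> V" "y \<in> V" "inj_on (extend x y) (set xs)" "set xs \<subseteq> {..Suc (Suc n)}"
    "distinct xs" "successively (\<lambda>a b. (extend x y a, extend x y b) \<in> A) xs"
    "length xs = n - 1"
  shows "adjacent A (extend x y (hd xs)) (extend x y (last xs))"
proof -
  have "xs \<noteq> []" using assms(7) n_ge_7 by auto
  moreover have "extend x y ` set xs \<subseteq> V"
    using assms(1,2,4) p_in_V unfolding extend_def by (auto simp: subset_iff le_Suc_eq)
  ultimately have "is_path V A (map (extend x y) xs)"
    using assms by (intro is_path_map)
  from quasi_transitive[OF this] assms(7) \<open>xs \<noteq> []\<close> show ?thesis
    by (simp add: hd_map last_map)
qed

lemma walk_ends_adjacent_one_outside: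
  assumes "z \<in> V" "z \<notin> p ` {..n}" "set xs \<subseteq> {..Suc n}" "distinct xs"
    "successively (\<lambda>a b. (extend z z a, extend z z b) \<in> A) xs" "length xs = n - 1"
  shows "adjacent A (extend z z (hd xs)) (extend z z (last xs))"
proof (rule walk_ends_adjacent)
  have "inj_on (extend z z) {..Suc n}"
    using inj_p assms(2) unfolding inj_on_def extend_def by (auto simp: le_Suc_eq)
  then show "inj_on (extend z z) (set xs)" using assms(3) by (rule inj_on_subset)
qed (use assms in auto)

lemma walk_ends_adjacent_two_outside:
  assumes "x \<in> V" "x \<notin> p ` {..n}" "y \<in> V" "y \<notin> p ` {..n}" "x \<noteq> y"
    "set xs \<subseteq> {..Suc (Suc n)}" "distinct xs"
    "successively (\<lambda>a b. (extend x y a, extend x y b) \<in> A) xs" "length xs = n - 1"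
  shows "adjacent A (extend x y (hd xs)) (extend x y (last xs))"
proof (rule walk_ends_adjacent)
  have "inj_on (extend x y) {..Suc (Suc n)}"
    using inj_p assms(2,4,5) unfolding inj_on_def extend_def by (auto simp: le_Suc_eq)
  then show "inj_on (extend x y) (set xs)" using assms(6) by (rule inj_on_subset)
qed (use assms in auto)

lemma not_adjacent_same_parity:
  "a \<le> n \<Longrightarrow> b \<le> n \<Longrightarrow> even a = even b \<Longrightarrow> \<not> adjacent A (p a) (p b)"
  unfolding adjacent_def using no_arc_same_parity by metis

lemma walk_ends_not_same_parity:
  assumes "z \<in> V" "z \<notin> p ` {..n}" "set xs \<subseteq> {..Suc n}" "distinct xs"
    "successively (\<lambda>a b. (extend z z a, extend z z b) \<in> A) xs" "length xs = n - 1"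
    "hd xs \<le> n" "last xs \<le> n"
  shows "even (hd xs) \<noteq> even (last xs)"
  using walk_ends_adjacent_one_outside[OF assms(1-6)] not_adjacent_same_parity assms(7,8)
  by auto

(* The path z, p a, ..., p (b - 1), p c, ..., p (d - 1) has n - 1 vertices. *)

lemma adjacent_via_chord:
  assumes "z \<in> V" "z \<notin> p ` {..n}" "(z, p a) \<in> A" "a < b" "b \<le> Suc n" "c < d" "d \<le> a"
    "(p (b - 1), p c) \<in> A" "1 + (b - a) + (d - c) = n - 1"
  shows "adjacent A z (p (d - 1))"
proof -
  let ?xs = "Suc n # [a..<b] @ [c..<d]"
  have "adjacent A (extend z z (hd ?xs)) (extend z z (last ?xs))"
  proof (rule walk_ends_adjacent_one_outside[OF assms(1,2)])
    show "successively (\<lambda>x y. (extend z z x, extend z z y) \<in> A) ?xs"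
      using assms successively_extend_upt[of b z z a] successively_extend_upt[of d z z c]
      by (auto simp: successively_Cons successively_append_iff hd_append last_upt)
  qed (use assms in auto)
  then show ?thesis using assms by (simp add: last_upt)
qed

lemma adjacent_via_segment:
  assumes "z \<in> V" "z \<notin> p ` {..n}" "(z, p a) \<in> A" "a < b" "b \<le> Suc n" "1 + (b - a) = n - 1"
  shows "adjacent A z (p (b - 1))"
proof -
  let ?xs = "Suc n # [a..<b]"
  have "adjacent A (extend z z (hd ?xs)) (extend z z (last ?xs))"
  proof (rule walk_ends_adjacent_one_outside[OF assms(1,2)])
    show "successively (\<lambda>x y. (extend z z x, extend z z y) \<in> A) ?xs"
      using assms successively_extend_upt[of b z z a] by (auto simp: successively_Cons)
  qed (use assms in auto)
  then show ?thesis using assms by (simp add: last_upt)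
qed

lemma out_arc_adjacent_two_below:
  assumes "z \<in> V" "z \<notin> p ` {..n}" "(z, p j) \<in> A" "2 \<le> j" "j \<le> n"
  shows "adjacent A z (p (j - 2))"
proof (cases "4 \<le> j")
  case True
  have "(p n, p 2) \<in> A" using backward_chord[of 2 n] n_ge_7 n_odd by simp
  then have "adjacent A z (p (j - 1 - 1))"
    by (intro adjacent_via_chord[OF assms(1-3), of "Suc n" 2 "j - 1"])
      (use True assms n_ge_7 in simp_all)
  moreover have "j - 1 - 1 = j - 2" by simp
  ultimately show ?thesis by simp
next
  case False
  have "(p (n - 2), p 0) \<in> A" using backward_chord[of 0 "n - 2"] n_ge_7 n_odd by simp
  moreover have "n - 1 - 1 = n - 2" by simp
  ultimately have "adjacent A z (p (j - 1 - 1))"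
    by (intro adjacent_via_chord[OF assms(1-3), of "n - 1" 0 "j - 1"])
      (use False assms n_ge_7 in simp_all)
  moreover have "j - 1 - 1 = j - 2" by simp
  ultimately show ?thesis by simp
qed

lemma out_arc_adjacent_four_below:
  assumes "z \<in> V" "z \<notin> p ` {..n}" "(z, p j) \<in> A" "4 \<le> j" "j \<le> n"
  shows "adjacent A z (p (j - 4))"
proof -
  have "(p n, p 0) \<in> A" using backward_chord[of 0 n] n_ge_7 n_odd by simp
  then have "adjacent A z (p (j - 3 - 1))"
    by (intro adjacent_via_chord[OF assms(1-3), of "Suc n" 0 "j - 3"]) (use assms n_ge_7 in simp_all)
  then show ?thesis by (simp add: diff_diff_add)
qed

lemma out_arc_adjacent_wrap:
  assumes "z \<in> V" "z \<notin> p ` {..n}" "(z, p j) \<in> A" "j \<le> 3"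
  shows "adjacent A z (p (j + n - 3))"
  using adjacent_via_segment[OF assms(1-3), of "j + n - 2"] assms n_ge_7 by simp

(* Descend in steps of two: if the arc between z and p (j - 2) points into z, then
   detour_bound forces z -> p (j - 4). *)

lemma out_arc_adjacent_below:
  assumes z: "z \<in> V" "z \<notin> p ` {..n}"
  shows "(z, p j) \<in> A \<Longrightarrow> j \<le> n \<Longrightarrow> m \<le> j \<Longrightarrow> even m = even j \<Longrightarrow> adjacent A z (p m)"
proof (induction j rule: less_induct)
  case (less j)
  show ?case
  proof (cases "m + 2 \<le> j")
    case False
    then have "m = j" using less.prems by presburger
    then show ?thesis using less.prems unfolding adjacent_def by simp
  next
    case j2: True
    have adj2: "adjacent A z (p (j - 2))"
      using out_arc_adjacent_two_below[OF z less.prems(1)] j2 less.prems by simp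
    show ?thesis
    proof (cases "(z, p (j - 2)) \<in> A \<or> m = j - 2")
      case True
      then show ?thesis using less.IH[of "j - 2"] less.prems j2 adj2 by auto
    next
      case False
      have "m \<noteq> j - 2" using False by simp
      then have j4: "m + 4 \<le> j" using j2 less.prems(4) by presburger
      have adj4: "adjacent A z (p (j - 4))"
        using out_arc_adjacent_four_below[OF z less.prems(1)] j4 less.prems by simp
      have "(p (j - 4), z) \<notin> A"
      proof
        assume "(p (j - 4), z) \<in> A"
        then have "j \<le> j - 4 + 2" using detour_bound[OF z, of "j - 4" j] less.prems(1,2) by simp
        then show False using j4 by simp
      qed
      then have "(z, p (j - 4)) \<in> A" using adj4 unfolding adjacent_def by simp
      then show ?thesis using less.IH[of "j - 4"] less.prems j4 by simp
    qed
  qed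
qed

lemma image_reversed: "(\<lambda>m. p (n - m)) ` {..n} = p ` {..n}"
proof
  show "p ` {..n} \<subseteq> (\<lambda>m. p (n - m)) ` {..n}"
  proof
    fix x assume "x \<in> p ` {..n}"
    then obtain m where "m \<le> n" "x = p (n - (n - m))" by auto
    then show "x \<in> (\<lambda>m. p (n - m)) ` {..n}" by (metis atMost_iff diff_le_self image_eqI)
  qed
qed auto

lemma converse_reversed: "bipartite_geodesic V (A\<inverse>) (\<lambda>m. p (n - m)) n"
proof
  show "inj_on (\<lambda>m. p (n - m)) {..n}"
    using inj_p unfolding inj_on_def by (metis atMost_iff diff_diff_cancel diff_le_self)
  show "(p (n - m), p (n - Suc m)) \<in> A\<inverse>" if "m < n" for m
    using path_arc[of "n - Suc m"] that by (simp add: Suc_diff_Suc)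
  show "(p (n - b), p (n - a)) \<in> A\<inverse>" if "a + 3 \<le> b" "b \<le> n" "odd (b - a)" for a b
    using backward_chord[of "n - b" "n - a"] that by simp
  show "(p (n - a), p (n - b)) \<notin> A\<inverse>" if "a \<le> n" "b \<le> n" "even a = even b" for a b
    using no_arc_same_parity[of "n - b" "n - a"] that by (simp add: even_diff_nat)
  show "j \<le> i + 2" if "z \<in> V" "z \<notin> (\<lambda>m. p (n - m)) ` {..n}" "i \<le> n" "j \<le> n"
    "(p (n - i), z) \<in> A\<inverse>" "(z, p (n - j)) \<in> A\<inverse>" for z i j
    using detour_bound[of z "n - j" "n - i"] that image_reversed by simp
  show "adjacent (A\<inverse>) (hd ps) (last ps)" if "is_path V (A\<inverse>) ps" "length ps = n - 1" for ps
  proof -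
    have "is_path V A (rev ps)" "ps \<noteq> []"
      using that is_path_converse[of V A ps] unfolding is_path_def by auto
    then have "adjacent A (hd (rev ps)) (last (rev ps))" using quasi_transitive that by simp
    then show ?thesis using \<open>ps \<noteq> []\<close> by (simp add: hd_rev last_rev adjacent_commute)
  qed
qed (use n_ge_7 n_odd p_in_V no_loop in auto)

lemma in_arc_adjacent_above:
  assumes "z \<in> V" "z \<notin> p ` {..n}" "(p i, z) \<in> A" "i \<le> m" "m \<le> n" "even m = even i"
  shows "adjacent A z (p m)"
proof -
  have "adjacent (A\<inverse>) z (p (n - (n - m)))"
    by (rule bipartite_geodesic.out_arc_adjacent_below[OF converse_reversed, of z "n - i"])
      (use assms image_reversed in \<open>simp_all add: even_diff_nat\<close>)
  then show ?thesis using assms by simp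
qed

lemma in_arc_adjacent_wrap:
  assumes "z \<in> V" "z \<notin> p ` {..n}" "(p i, z) \<in> A" "n - 3 \<le> i" "i \<le> n"
  shows "adjacent A z (p (i + 3 - n))"
proof -
  have "adjacent (A\<inverse>) z (p (n - (n - i + n - 3)))"
    by (rule bipartite_geodesic.out_arc_adjacent_wrap[OF converse_reversed, of z "n - i"])
      (use assms image_reversed in simp_all)
  moreover have "n - (n - i + n - 3) = i + 3 - n" using assms n_ge_7 by simp
  ultimately show ?thesis by simp
qed

lemma wrap_arcs_same_parity_far:
  assumes z: "z \<in> V" "z \<notin> p ` {..n}" and arcs: "(p i, z) \<in> A" "(z, p j) \<in> A"
    and ij: "j \<le> 3" "j + n - 2 \<le> i" "i \<le> n"
  shows "even i = even j"
proof -
  let ?xs = "[i, Suc n] @ [j..<j + n - 3]"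
  have "even (hd ?xs) \<noteq> even (last ?xs)"
  proof (rule walk_ends_not_same_parity[OF z])
    show "successively (\<lambda>x y. (extend z z x, extend z z y) \<in> A) ?xs"
      using arcs ij n_ge_7 successively_extend_upt[of "j + n - 3" z z j]
      by (auto simp: successively_Cons)
  qed (use ij n_ge_7 in \<open>auto simp: last_upt\<close>)
  moreover have "last ?xs = j + n - 4" using n_ge_7 by (simp add: last_upt)
  ultimately show ?thesis using n_odd n_ge_7 by (simp add: even_diff_nat)
qed

(* The mixed-parity cases not covered by wrap_arcs_same_parity_far: there the path from z
   along P is too short and is lengthened by a detour through backward chords. *)

lemma no_wrap_arcs_from_n_minus_3:
  assumes z: "z \<in> V" "z \<notin> p ` {..n}" and arcs: "(p (n - 3), z) \<in> A" "(z, p j) \<in> A"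
    and j: "j = 1 \<or> j = 3"
  shows False
proof -
  let ?xs = "[n - 2, n - 1, n, n - 3, Suc n] @ [j..<j + n - 6]"
  have "Suc (n - 2) = n - 1" using n_ge_7 by simp
  then have chords: "(p (n - 2), p (n - 1)) \<in> A" "(p (n - 1), p n) \<in> A" "(p n, p (n - 3)) \<in> A"
    using path_arc[of "n - 2"] path_arc[of "n - 1"] backward_chord[of "n - 3" n] n_ge_7
    by simp_all
  have "even (hd ?xs) \<noteq> even (last ?xs)"
  proof (rule walk_ends_not_same_parity[OF z])
    show "successively (\<lambda>x y. (extend z z x, extend z z y) \<in> A) ?xs"
      using arcs j n_ge_7 successively_extend_upt[of "j + n - 6" z z j] chords
      by (auto simp: successively_Cons)
  qed (use j n_ge_7 in \<open>auto simp: last_upt\<close>)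
  moreover have "last ?xs = j + n - 7" using n_ge_7 by (simp add: last_upt)
  ultimately show False using j n_odd n_ge_7 by (auto simp: even_diff_nat)
qed

lemma no_wrap_arcs_from_n_minus_2:
  assumes z: "z \<in> V" "z \<notin> p ` {..n}" and arcs: "(p (n - 2), z) \<in> A" "(z, p 2) \<in> A"
  shows False
proof -
  let ?xs = "[4..<n - 1] @ [Suc n, 2, 3, 0]"
  have chords: "(p 2, p 3) \<in> A" "(p 3, p 0) \<in> A"
    using path_arc[of 2] backward_chord[of 0 3] n_ge_7 by simp_all
  have "even (hd ?xs) \<noteq> even (last ?xs)"
  proof (rule walk_ends_not_same_parity[OF z])
    have "(p (n - 1 - 1), z) \<in> A" using arcs by (simp add: numeral_2_eq_2)
    then show "successively (\<lambda>x y. (extend z z x, extend z z y) \<in> A) ?xs"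
      using arcs n_ge_7 successively_extend_upt[of "n - 1" z z 4] chords
      by (auto simp: successively_append_iff last_upt)
  qed (use n_ge_7 in auto)
  then show False using n_ge_7 by simp
qed

lemma no_wrap_arcs_from_n_minus_1:
  assumes z: "z \<in> V" "z \<notin> p ` {..n}" and arcs: "(p (n - 1), z) \<in> A" "(z, p 3) \<in> A"
  shows False
proof -
  let ?xs = "[6..<n] @ [Suc n, 3, 0, 1, 2]"
  have chords: "(p 0, p 1) \<in> A" "(p 1, p 2) \<in> A" "(p 3, p 0) \<in> A"
    using path_arc[of 0] path_arc[of 1] backward_chord[of 0 3] n_ge_7
    by (simp_all, simp add: numeral_2_eq_2)
  have "even (hd ?xs) \<noteq> even (last ?xs)"
  proof (rule walk_ends_not_same_parity[OF z])
    show "successively (\<lambda>x y. (extend z z x, extend z z y) \<in> A) ?xs"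
      using arcs n_ge_7 successively_extend_upt[of n z z 6] chords
      by (auto simp: successively_append_iff last_upt)
  qed (use n_ge_7 in auto)
  then show False using n_ge_7 by simp
qed

lemma wrap_arcs_same_parity:
  assumes z: "z \<in> V" "z \<notin> p ` {..n}" and arcs: "(p i, z) \<in> A" "(z, p j) \<in> A"
    and ij: "j \<le> 3" "n - 3 \<le> i" "i \<le> n"
  shows "even i = even j"
proof (rule ccontr)
  assume par: "even i \<noteq> even j"
  have "i = n - 3 \<or> i = n - 2 \<or> i = n - 1 \<or> i = n" "j = 0 \<or> j = 1 \<or> j = 2 \<or> j = 3"
    using ij by linarith+
  moreover have "even (n - 3)" "odd (n - 2)" "even (n - 1)"
    using n_odd n_ge_7 by (simp_all add: even_diff_nat)
  ultimately consider "j + n - 2 \<le> i" | "j = 1 \<or> j = 3" "i = n - 3" | "j = 2" "i = n - 2"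
    | "j = 3" "i = n - 1"
    using par n_odd n_ge_7 by auto
  then show False
    using wrap_arcs_same_parity_far[OF z arcs ij(1) _ ij(3)] par no_wrap_arcs_from_n_minus_3[OF z]
      no_wrap_arcs_from_n_minus_2[OF z] no_wrap_arcs_from_n_minus_1[OF z] arcs
    by cases auto
qed

lemma out_arc_near_start:
  assumes z: "z \<in> V" "z \<notin> p ` {..n}" and arc: "(z, p j) \<in> A" "j \<le> n"
  obtains j' where "j' \<le> 3" "even j' = even j" "(z, p j') \<in> A"
proof (cases "j \<le> 3")
  case False
  have "adjacent A z (p (j mod 2))"
    using out_arc_adjacent_below[OF z arc] by simp
  moreover have "(p (j mod 2), z) \<notin> A"
    using detour_bound[OF z _ arc(2) _ arc(1), of "j mod 2"] False n_ge_7
      mod_less_divisor[of 2 j] by linarith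
  ultimately have "(z, p (j mod 2)) \<in> A" unfolding adjacent_def by simp
  then show thesis by (rule that[rotated 2]) auto
qed (use that arc in blast)

lemma in_arc_near_end:
  assumes z: "z \<in> V" "z \<notin> p ` {..n}" and arc: "(p i, z) \<in> A" "i \<le> n"
  obtains i' where "n - 3 \<le> i'" "i' \<le> n" "even i' = even i" "(p i', z) \<in> A"
proof -
  obtain j' where j': "j' \<le> 3" "even j' = even (n - i)" "(z, p (n - j')) \<in> A\<inverse>"
    by (rule bipartite_geodesic.out_arc_near_start[OF converse_reversed, of z "n - i"])
      (use z arc image_reversed in simp_all)
  show thesis
    by (rule that[of "n - j'"]) (use j' arc n_ge_7 in \<open>auto simp: even_diff_nat\<close>)
qed

lemma in_out_neighbours_same_parity:
  assumes z: "z \<in> V" "z \<notin> p ` {..n}"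
    and arcs: "(p i, z) \<in> A" "(z, p j) \<in> A" "i \<le> n" "j \<le> n"
  shows "even i = even j"
proof -
  obtain i' where "n - 3 \<le> i'" "i' \<le> n" "even i' = even i" "(p i', z) \<in> A"
    using in_arc_near_end[OF z arcs(1,3)] .
  moreover obtain j' where "j' \<le> 3" "even j' = even j" "(z, p j') \<in> A"
    using out_arc_near_start[OF z arcs(2,4)] .
  ultimately show ?thesis using wrap_arcs_same_parity[OF z] by metis
qed

lemma out_arc_adjacent_start:
  assumes z: "z \<in> V" "z \<notin> p ` {..n}"
    and arcs: "(p i, z) \<in> A" "(z, p j) \<in> A" "i \<le> n" "j \<le> n"
    and m: "m \<le> 3" "even m = even j"
  shows "adjacent A z (p m)"
proof (cases "m \<le> j")
  case True
  show ?thesis by (rule out_arc_adjacent_below[OF z arcs(2,4) True m(2)])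
next
  case False
  have ij: "even i = even j" using in_out_neighbours_same_parity[OF z arcs] .
  show ?thesis
  proof (cases "i \<le> m")
    case True
    then show ?thesis using in_arc_adjacent_above[OF z arcs(1) True] m ij n_ge_7 by simp
  next
    case False
    have "2 \<le> m" using \<open>\<not> m \<le> j\<close> m(2) by presburger
    define h where "h = m + n - 3"
    have h: "even h = even i" "h \<le> n" "m \<le> h" "n - 1 \<le> h"
      unfolding h_def using \<open>2 \<le> m\<close> m ij n_odd n_ge_7 by (auto simp: even_diff_nat)
    have "i \<le> h"
    proof (rule ccontr)
      assume "\<not> i \<le> h"
      then have "i = n" "h = n - 1" using h arcs(3) by auto
      then show False using h(1) n_odd n_ge_7 by (simp add: even_diff_nat)
    qed
    then have "adjacent A z (p h)" using in_arc_adjacent_above[OF z arcs(1)] h by simp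
    then consider "(z, p h) \<in> A" | "(p h, z) \<in> A" unfolding adjacent_def by blast
    then show ?thesis
    proof cases
      case 1
      then show ?thesis using out_arc_adjacent_below[OF z 1 h(2,3)] h(1) ij m(2) by simp
    next
      case 2
      moreover have "h + 3 - n = m" unfolding h_def using n_ge_7 by simp
      ultimately show ?thesis using in_arc_adjacent_wrap[OF z 2] h by simp
    qed
  qed
qed

lemma in_arc_adjacent_end:
  assumes z: "z \<in> V" "z \<notin> p ` {..n}"
    and arcs: "(p i, z) \<in> A" "(z, p j) \<in> A" "i \<le> n" "j \<le> n"
    and m: "n - 3 \<le> m" "m \<le> n" "even m = even i"
  shows "adjacent A z (p m)"
proof -
  have "adjacent (A\<inverse>) z (p (n - (n - m)))"
    by (rule bipartite_geodesic.out_arc_adjacent_start[OF converse_reversed, of z "n - j" "n - i"])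
      (use assms image_reversed in \<open>auto simp: even_diff_nat\<close>)
  then show ?thesis using m by simp
qed

section \<open>The vertices of B\<close>

definition in_B :: "'a \<Rightarrow> bool" where
  "in_B z \<longleftrightarrow> z \<in> V \<and> z \<notin> p ` {..n} \<and> (\<exists>i\<le>n. (p i, z) \<in> A) \<and> (\<exists>j\<le>n. (z, p j) \<in> A)"

(* Well defined on B by in_out_neighbours_same_parity: all P-neighbours of z have the
   same index parity. *)

definition even_class :: "'a \<Rightarrow> bool" where
  "even_class z \<longleftrightarrow> (\<exists>i\<le>n. (p i, z) \<in> A \<and> even i)"

lemma adjacent_parity_eq_class:
  assumes B: "in_B z" and m: "m \<le> n" "adjacent A z (p m)"
  shows "even m \<longleftrightarrow> even_class z"
proof -
  have z: "z \<in> V" "z \<notin> p ` {..n}" using B unfolding in_B_def by auto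
  obtain j where j: "j \<le> n" "(z, p j) \<in> A" using B unfolding in_B_def by auto
  obtain i where i: "i \<le> n" "(p i, z) \<in> A" using B unfolding in_B_def by auto
  have in_parity: "even i' = even j" if "i' \<le> n" "(p i', z) \<in> A" for i'
    using in_out_neighbours_same_parity[OF z that(2) j(2) that(1) j(1)] .
  have "even_class z \<longleftrightarrow> even j" unfolding even_class_def using in_parity i by blast
  moreover have "even m = even j"
  proof (cases "(p m, z) \<in> A")
    case False
    then have "(z, p m) \<in> A" using m unfolding adjacent_def by auto
    then show ?thesis using in_out_neighbours_same_parity[OF z i(2) _ i(1) m(1)] in_parity[OF i] by simp
  qed (use in_parity m in blast)
  ultimately show ?thesis by simp
qed

lemma adjacent_ends_of_class:
  assumes B: "in_B z" and m: "m \<le> n" "m \<le> 3 \<or> n - 3 \<le> m" "even m \<longleftrightarrow> even_class z"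
  shows "adjacent A z (p m)"
proof -
  have z: "z \<in> V" "z \<notin> p ` {..n}" using B unfolding in_B_def by auto
  obtain j where j: "j \<le> n" "(z, p j) \<in> A" using B unfolding in_B_def by auto
  obtain i where i: "i \<le> n" "(p i, z) \<in> A" using B unfolding in_B_def by auto
  have "even j \<longleftrightarrow> even_class z" "even i \<longleftrightarrow> even_class z"
    using adjacent_parity_eq_class[OF B] i j unfolding adjacent_def by auto
  then show ?thesis
    using m out_arc_adjacent_start[OF z i(2) j(2) i(1) j(1)]
      in_arc_adjacent_end[OF z i(2) j(2) i(1) j(1)] by auto
qed

lemma out_arc_start_of_class:
  assumes B: "in_B z"
  obtains m where "m \<le> 3" "even m \<longleftrightarrow> even_class z" "(z, p m) \<in> A"
proof -
  have z: "z \<in> V" "z \<notin> p ` {..n}" using B unfolding in_B_def by auto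
  obtain j where "j \<le> n" "(z, p j) \<in> A" using B unfolding in_B_def by auto
  then obtain m where "m \<le> 3" "(z, p m) \<in> A" using out_arc_near_start[OF z] by metis
  then show thesis
    using that adjacent_parity_eq_class[OF B, of m] n_ge_7 unfolding adjacent_def by auto
qed

lemma in_arc_end_of_class:
  assumes B: "in_B z"
  obtains m where "n - 3 \<le> m" "m \<le> n" "even m \<longleftrightarrow> even_class z" "(p m, z) \<in> A"
proof -
  have z: "z \<in> V" "z \<notin> p ` {..n}" using B unfolding in_B_def by auto
  obtain i where "i \<le> n" "(p i, z) \<in> A" using B unfolding in_B_def by auto
  then obtain m where "n - 3 \<le> m" "m \<le> n" "(p m, z) \<in> A" using in_arc_near_end[OF z] by metis
  then show thesis
    using that adjacent_parity_eq_class[OF B, of m] unfolding adjacent_def by auto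
qed

lemma adjacent_via_consecutive:
  assumes x: "x \<in> V" "x \<notin> p ` {..n}" and y: "y \<in> V" "y \<notin> p ` {..n}" and "x \<noteq> y"
    and m: "1 \<le> m" "m \<le> n" and arcs: "(x, p m) \<in> A" "(p (m - 1), y) \<in> A"
  shows "adjacent A x y"
proof -
  obtain s t where st: "s < m" "m \<le> t" "t \<le> n" "t = s + (n - 4)"
  proof (cases "m \<le> 4")
    case True
    show ?thesis by (rule that[of "m - 1" "m + n - 5"]) (use m n_ge_7 True in linarith)+
  next
    case False
    show ?thesis by (rule that[of 4 n]) (use m n_ge_7 False in linarith)+
  qed
  have chord: "(p t, p s) \<in> A" using backward_chord[of s t] st n_ge_7 n_odd by (simp add: even_diff_nat)
  let ?xs = "Suc n # [m..<Suc t] @ [s..<m] @ [Suc (Suc n)]"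
  have "adjacent A (extend x y (hd ?xs)) (extend x y (last ?xs))"
  proof (rule walk_ends_adjacent_two_outside[OF x y \<open>x \<noteq> y\<close>])
    show "successively (\<lambda>a b. (extend x y a, extend x y b) \<in> A) ?xs"
      using st arcs chord successively_extend_upt[of "Suc t" x y m] successively_extend_upt[of m x y s]
      by (auto simp del: upt_Suc simp: successively_Cons successively_append_iff last_upt)
  qed (use st n_ge_7 in auto)
  then show ?thesis by simp
qed

lemma adjacent_via_wrap:
  assumes x: "x \<in> V" "x \<notin> p ` {..n}" and y: "y \<in> V" "y \<notin> p ` {..n}" and "x \<noteq> y"
    and j: "j \<le> 4" and arcs: "(x, p j) \<in> A" "(p (j + n - 4), y) \<in> A"
  shows "adjacent A x y"
proof -
  let ?xs = "Suc n # [j..<j + n - 3] @ [Suc (Suc n)]"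
  have "adjacent A (extend x y (hd ?xs)) (extend x y (last ?xs))"
  proof (rule walk_ends_adjacent_two_outside[OF x y \<open>x \<noteq> y\<close>])
    show "successively (\<lambda>a b. (extend x y a, extend x y b) \<in> A) ?xs"
      using j n_ge_7 arcs successively_extend_upt[of "j + n - 3" x y j]
      by (auto simp del: upt_Suc simp: successively_Cons successively_append_iff last_upt)
  qed (use j n_ge_7 in auto)
  then show ?thesis by simp
qed

lemma arc_extends_to_opposite_parity:
  assumes x: "x \<in> V" "x \<notin> p ` {..n}" and y: "y \<in> V" "y \<notin> p ` {..n}"
    and arcs: "(p i, x) \<in> A" "(x, y) \<in> A" "i \<le> n"
  obtains a where "a \<le> n" "even a \<noteq> even i" "adjacent A (p a) y"
proof -
  have "x \<noteq> y" using arcs(2) no_loop by auto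
  show thesis
  proof (cases "n - 4 \<le> i")
    case True
    let ?a = "i + 4 - n"
    let ?xs = "[?a..<Suc i] @ [Suc n, Suc (Suc n)]"
    have "adjacent A (extend x y (hd ?xs)) (extend x y (last ?xs))"
    proof (rule walk_ends_adjacent_two_outside[OF x y \<open>x \<noteq> y\<close>])
      have "Suc i - ?a = n - 3" using True n_ge_7 arcs(3) by linarith
      then show "length ?xs = n - 1" unfolding length_append length_upt using n_ge_7 by simp
      show "successively (\<lambda>a b. (extend x y a, extend x y b) \<in> A) ?xs"
        using arcs successively_extend_upt[of "Suc i" x y ?a] n_ge_7 True
        by (auto simp del: upt_Suc simp: successively_Cons successively_append_iff last_upt)
    qed (use arcs n_ge_7 in auto)
    moreover have "hd ?xs = ?a" using True n_ge_7 arcs by (simp del: upt_Suc add: hd_append)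
    moreover have "even ?a \<noteq> even i" "?a \<le> n"
      using True n_ge_7 n_odd arcs(3) by (auto simp: even_diff_nat)
    ultimately show thesis using that[of ?a] by simp
  next
    case False
    let ?xs = "[i + 5..<Suc n] @ [0..<Suc i] @ [Suc n, Suc (Suc n)]"
    have chord: "(p n, p 0) \<in> A" using backward_chord[of 0 n] n_ge_7 n_odd by simp
    have "adjacent A (extend x y (hd ?xs)) (extend x y (last ?xs))"
    proof (rule walk_ends_adjacent_two_outside[OF x y \<open>x \<noteq> y\<close>])
      have "Suc n - (i + 5) = n - 4 - i" using False by linarith
      then show "length ?xs = n - 1" unfolding length_append length_upt using n_ge_7 False by simp
      show "successively (\<lambda>a b. (extend x y a, extend x y b) \<in> A) ?xs"
        using arcs chord successively_extend_upt[of "Suc n" x y "i + 5"]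
          successively_extend_upt[of "Suc i" x y 0] n_ge_7 False
        by (auto simp del: upt_Suc simp: successively_Cons successively_append_iff last_upt)
    qed (use arcs n_ge_7 in auto)
    moreover have "hd ?xs = i + 5"
    proof -
      have "i + 5 < Suc n" using False by linarith
      then show ?thesis by (simp del: upt_Suc add: hd_append)
    qed
    ultimately show thesis using that[of "i + 5"] False by simp
  qed
qed

lemma same_class_no_arc:
  assumes B: "in_B x" "in_B y" and "even_class x \<longleftrightarrow> even_class y"
  shows "(x, y) \<notin> A"
proof
  assume "(x, y) \<in> A"
  obtain i where i: "i \<le> n" "(p i, x) \<in> A" using B(1) unfolding in_B_def by auto
  obtain a where "a \<le> n" "even a \<noteq> even i" "adjacent A (p a) y"
    by (rule arc_extends_to_opposite_parity[OF _ _ _ _ i(2) \<open>(x, y) \<in> A\<close> i(1)])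
      (use B in \<open>auto simp: in_B_def\<close>)
  moreover have "even i \<longleftrightarrow> even_class x"
    using adjacent_parity_eq_class[OF B(1) i(1)] i(2) unfolding adjacent_def by simp
  ultimately show False
    using adjacent_parity_eq_class[OF B(2), of a] assms(3) by (simp add: adjacent_commute)
qed

(* The orientations of the arcs between alt m and p m are forced from both ends of P
   until they clash. *)

context
  fixes x y :: 'a
  assumes x: "in_B x" "even_class x" and y: "in_B y" "\<not> even_class y"
    and not_adjacent: "\<not> adjacent A x y"
begin

definition alt :: "nat \<Rightarrow> 'a" where
  "alt m = (if even m then x else y)"

lemma alt_in_B: "in_B (alt m)" and alt_class: "even_class (alt m) \<longleftrightarrow> even m"
  using x y unfolding alt_def by auto

lemma alt_outside: "alt m \<in> V" "alt m \<notin> p ` {..n}"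
  using alt_in_B unfolding in_B_def by blast+

lemma alt_eq: "even a = even b \<Longrightarrow> alt a = alt b"
  unfolding alt_def by simp

lemma alt_not_adjacent: "even a \<noteq> even b \<Longrightarrow> \<not> adjacent A (alt a) (alt b)"
  using not_adjacent unfolding alt_def by (auto simp: adjacent_commute)

lemma alt_distinct: "even a \<noteq> even b \<Longrightarrow> alt a \<noteq> alt b"
  using alt_class by metis

lemma alt_arc_or:
  "m \<le> n \<Longrightarrow> m \<le> 3 \<or> n - 3 \<le> m \<Longrightarrow> (alt m, p m) \<in> A \<or> (p m, alt m) \<in> A"
  using adjacent_ends_of_class[OF alt_in_B, of m m] alt_class unfolding adjacent_def by simp

lemma alt_not_out_in:
  assumes "1 \<le> m" "m \<le> n" "(alt m, p m) \<in> A"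
  shows "(p (m - 1), alt (m - 1)) \<notin> A"
proof
  assume "(p (m - 1), alt (m - 1)) \<in> A"
  moreover have parity: "even m \<noteq> even (m - 1)" using assms(1) by simp
  ultimately have "adjacent A (alt m) (alt (m - 1))"
    using adjacent_via_consecutive[OF alt_outside alt_outside alt_distinct[OF parity] assms]
    by simp
  then show False using alt_not_adjacent[OF parity] by blast
qed

lemma alt_not_out_in_wrap:
  assumes "j \<le> 4" "(alt j, p j) \<in> A"
  shows "(p (j + n - 4), alt (j + n - 4)) \<notin> A"
proof
  assume "(p (j + n - 4), alt (j + n - 4)) \<in> A"
  moreover have parity: "even j \<noteq> even (j + n - 4)"
    using n_odd n_ge_7 by (simp add: even_diff_nat)
  ultimately have "adjacent A (alt j) (alt (j + n - 4))"
    using adjacent_via_wrap[OF alt_outside alt_outside alt_distinct[OF parity] assms] by simp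
  then show False using alt_not_adjacent[OF parity] by blast
qed

lemma alt_detour_bound:
  assumes "a \<le> n" "b \<le> n" "even a = even b" "(alt a, p a) \<in> A" "(p b, alt b) \<in> A"
  shows "a \<le> b + 2"
  using detour_bound[OF alt_outside(1)[of b] alt_outside(2)[of b] assms(2,1)] assms(4,5)
    alt_eq[OF assms(3)] by simp

lemma alt_out_arcs_start: "(alt 0, p 0) \<in> A" "(alt 1, p 1) \<in> A"
proof -
  have down: "(alt k, p k) \<in> A" if "m \<le> 3" "(alt m, p m) \<in> A" "k \<le> m" for m k
    using that
  proof (induction m)
    case (Suc m)
    show ?case
    proof (cases "k = Suc m")
      case False
      have "(alt m, p m) \<in> A"
        using alt_arc_or[of m] alt_not_out_in[of "Suc m"] Suc.prems n_ge_7 by auto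
      then show ?thesis using Suc False by simp
    qed (use Suc in simp)
  qed simp
  obtain a where "a \<le> 3" "even a" "(x, p a) \<in> A"
    using out_arc_start_of_class[OF x(1)] x(2) by metis
  then show "(alt 0, p 0) \<in> A" using down[of a 0] unfolding alt_def by simp
  obtain b where "b \<le> 3" "odd b" "(y, p b) \<in> A"
    using out_arc_start_of_class[OF y(1)] y(2) by metis
  then show "(alt 1, p 1) \<in> A" using down[of b 1] unfolding alt_def by (cases b) auto
qed

lemma alt_in_arcs_end: "(p n, alt n) \<in> A" "(p (n - 1), alt (n - 1)) \<in> A"
proof -
  have up: "(p k, alt k) \<in> A" if "n - 3 \<le> m" "(p m, alt m) \<in> A" "m \<le> k" "k \<le> n" for m k
    using that
  proof (induction k)
    case (Suc k)
    show ?case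
    proof (cases "m = Suc k")
      case False
      then have "(p k, alt k) \<in> A" using Suc by simp
      then show ?thesis
        using alt_arc_or[of "Suc k"] alt_not_out_in[of "Suc k"] Suc.prems by auto
    qed (use Suc in simp)
  qed simp
  obtain b where "n - 3 \<le> b" "b \<le> n" "odd b" "(p b, y) \<in> A"
    using in_arc_end_of_class[OF y(1)] y(2) by metis
  then show "(p n, alt n) \<in> A" using up[of b n] n_odd unfolding alt_def by simp
  obtain a where "n - 3 \<le> a" "a \<le> n" "even a" "(p a, x) \<in> A"
    using in_arc_end_of_class[OF x(1)] x(2) by metis
  then show "(p (n - 1), alt (n - 1)) \<in> A"
    using up[of a "n - 1"] n_odd n_ge_7 unfolding alt_def by (cases "a = n") auto
qed

lemma alt_contradiction: False
proof -
  have out0: "(alt 0, p 0) \<in> A" and out1: "(alt 1, p 1) \<in> A"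
    by (fact alt_out_arcs_start)+
  have in_n: "(p n, alt n) \<in> A" and in_n1: "(p (n - 1), alt (n - 1)) \<in> A"
    by (fact alt_in_arcs_end)+
  have out_n3: "(alt (n - 3), p (n - 3)) \<in> A"
    using alt_not_out_in_wrap[OF _ out1] alt_arc_or[of "n - 3"] by simp
  have in3: "(p 3, alt 3) \<in> A"
    using alt_not_out_in_wrap[of 3] in_n1 alt_arc_or[of 3] n_ge_7 by auto
  consider "(alt 2, p 2) \<in> A" | "(p 2, alt 2) \<in> A"
    using alt_arc_or[of 2] n_ge_7 by auto
  then show False
  proof cases
    case 1
    show False
    proof (cases "n = 7")
      case True
      then show False using alt_not_out_in_wrap[OF _ out0] in3 by simp
    next
      case False
      then have "9 \<le> n" using n_ge_7 n_odd by presburger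
      moreover have "(alt (n - 2), p (n - 2)) \<in> A"
      proof -
        have "2 + n - 4 = n - 2" "n - 3 \<le> n - 2" using n_ge_7 by simp_all
        then show ?thesis using alt_not_out_in_wrap[OF _ 1] alt_arc_or[of "n - 2"] by auto
      qed
      moreover have "even (n - 2) = even (3::nat)" using n_odd n_ge_7 by (simp add: even_diff_nat)
      ultimately show False using alt_detour_bound[of "n - 2" 3] in3 by simp
    qed
  next
    case 2
    have "even (n - 3) = even (2::nat)" using n_odd n_ge_7 by (simp add: even_diff_nat)
    then have "n = 7" using alt_detour_bound[OF _ _ _ out_n3 2] n_ge_7 by simp
    then show False using alt_not_out_in_wrap[of 4] out_n3 in_n by simp
  qed
qed

end

lemma different_class_adjacent:
  assumes "in_B x" "in_B y" "even_class x \<noteq> even_class y"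
  shows "adjacent A x y"
  using alt_contradiction[of x y] alt_contradiction[of y x] assms
  by (cases "even_class x") (auto simp: adjacent_commute)

theorem B_semicomplete_bipartite_or_empty:
  "semicomplete_bipartite_on A {z. in_B z} \<or> empty_on A {z. in_B z}"
proof (cases "\<exists>x y. in_B x \<and> in_B y \<and> even_class x \<and> \<not> even_class y")
  case True
  let ?X = "{z. in_B z \<and> even_class z}" and ?Y = "{z. in_B z \<and> \<not> even_class z}"
  have "?X \<union> ?Y = {z. in_B z}" "?X \<inter> ?Y = {}" "?X \<noteq> {}" "?Y \<noteq> {}"
    using True by auto
  moreover have "\<forall>x\<in>?X. \<forall>x'\<in>?X. (x, x') \<notin> A" "\<forall>y\<in>?Y. \<forall>y'\<in>?Y. (y, y') \<notin> A"
    using same_class_no_arc by auto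
  moreover have "\<forall>x\<in>?X. \<forall>y\<in>?Y. adjacent A x y"
    using different_class_adjacent by auto
  ultimately have "semicomplete_bipartite_on A {z. in_B z}"
    unfolding semicomplete_bipartite_on_def by blast
  then show ?thesis ..
next
  case False
  then have "empty_on A {z. in_B z}"
    unfolding empty_on_def using same_class_no_arc by blast
  then show ?thesis ..
qed

end

lemma bipartite_geodesic_shortest_path:
  assumes D: "digraph V A" "odd k" "5 \<le> k" "k_quasi_transitive k V A"
    and P: "is_uv_path V A u v P" "length P = dist V A u v + 1" "dist V A u v = k + 2"
    and bip: "semicomplete_bipartite_on A (set P)"
  shows "bipartite_geodesic V A (nth P) (k + 2)"
proof -
  have path: "is_path V A P" using P(1) unfolding is_uv_path_def by simp
  have len: "length P = k + 3" using P(2,3) by simp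
  have adj_iff: "adjacent A (P ! a) (P ! b) \<longleftrightarrow> even a \<noteq> even b" if "a \<le> k + 2" "b \<le> k + 2" for a b
    using semicomplete_bipartite_path_adjacent_iff[OF path bip] that len by simp
  have image: "nth P ` {..k + 2} = set P"
    using len by (auto simp: set_conv_nth less_Suc_eq_le)
  show ?thesis
  proof
    show "inj_on (nth P) {..k + 2}"
      using path len by (intro inj_on_nth) (auto simp: is_path_def)
    show "P ! m \<in> V" if "m \<le> k + 2" for m
      using path that len by (auto simp: is_path_def)
    show "(P ! m, P ! Suc m) \<in> A" if "m < k + 2" for m
      using path that len by (simp add: is_path_def)
    show "(P ! b, P ! a) \<in> A" if "a + 3 \<le> b" "b \<le> k + 2" "odd (b - a)" for a b
      using adj_iff[of a b] shortest_path_no_shortcut[OF P(1,2), of a b] that len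
      by (auto simp: adjacent_def even_diff_nat)
    show "(P ! a, P ! b) \<notin> A" if "a \<le> k + 2" "b \<le> k + 2" "even a = even b" for a b
      using adj_iff[OF that(1,2)] that(3) unfolding adjacent_def by simp
    show "j \<le> i + 2" if "z \<in> V" "z \<notin> nth P ` {..k + 2}" "i \<le> k + 2" "j \<le> k + 2"
      "(P ! i, z) \<in> A" "(z, P ! j) \<in> A" for z i j
      using shortest_path_detour_bound[OF P(1,2) that(1)] that(2-6) image len by simp
    show "adjacent A (hd ps) (last ps)" if "is_path V A ps" "length ps = k + 2 - 1" for ps
      using D(4) that unfolding k_quasi_transitive_def by simp
    show "7 \<le> k + 2" "odd (k + 2)" using D(2,3) by simp_all
    show "(x, x) \<notin> A" for x using D(1) unfolding digraph_def by simp
  qed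
qed

theorem lemma2p14:
  fixes V :: "'a set" and A :: "('a \<times> 'a) set" and k :: nat
    and u v :: 'a and P :: "'a list"
  assumes "digraph V A"
    and "odd k" and "k \<ge> 5"
    and "strong V A" and "k_quasi_transitive k V A"
    and "diam V A \<ge> k + 2"
    and "u \<in> V" and "v \<in> V" and "dist V A u v = k + 2"
    and "is_uv_path V A u v P" and "length P = dist V A u v + 1"
    and "semicomplete_bipartite_on A (set P)"
  shows "let I = {x \<in> V - set P. dom_to A {x} (set P)};
             W = {x \<in> V - set P. dom_to A (set P) {x}};
             B = V - (set P \<union> I \<union> W)
         in semicomplete_bipartite_on A B \<or> empty_on A B"
proof -
  interpret bipartite_geodesic V A "nth P" "k + 2"
    by (rule bipartite_geodesic_shortest_path[OF assms(1-3,5,10,11,9,12)])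
  have "set P = nth P ` {..k + 2}"
    using assms(9,11) by (auto simp: set_conv_nth less_Suc_eq_le)
  then have "V - (set P \<union> {x \<in> V - set P. dom_to A {x} (set P)}
      \<union> {x \<in> V - set P. dom_to A (set P) {x}}) = {z. in_B z}"
    unfolding in_B_def dom_to_def by auto
  then show ?thesis using B_semicomplete_bipartite_or_empty by (simp add: Let_def)
qed

end
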